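(* Let $C$ be a circle in the plane, let $p,r$ be points on $C$, and let $q$ be a point in the open disk bounded by $C$. Suppose the ordered triple $(p,q,r)$ makes a clockwise (resp. counterclockwise) turn. Let $\gamma$ be a simple piecewise-linear path that starts at $p$, passes through $q$, ends at $r$, and meets $C$ only at $p$ and $r$. Then $\gamma$ has at least one clockwise (resp. counterclockwise) vertex, i.e. a vertex at which the path turns clockwise (resp. counterclockwise). *)

theory Defs
  imports "HOL-Analysis.Analysis"
begin

text \<open>Points of the plane are complex numbers. The orientation of an ordered
triple: positive = counterclockwise turn, negative = clockwise turn, zero = collinear.\<close>
definition orient :: "complex \<Rightarrow> complex \<Rightarrow> complex \<Rightarrow> real" where
  "orient a b c = Im (cnj (b - a) * (c - a))"

fun polypath :: "complex list \<Rightarrow> real \<Rightarrow> complex" where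
  "polypath [] = linepath 0 0"
| "polypath [a] = linepath a a"
| "polypath [a, b] = linepath a b"
| "polypath (a # b # c # rest) = linepath a b +++ polypath (b # c # rest)"

end

theory Submission
  imports Defs "HOL-Complex_Analysis.Winding_Numbers"
begin

text \<open>
  After a similarity we may assume \<open>p = 0\<close>, \<open>r = 1\<close> and \<open>q\<close> above the real axis (clockwise case;
  complex conjugation gives the other). Suppose no vertex turns clockwise. Closing the path by a
  polygon \<open>1 \<rightarrow> corner_right \<rightarrow> corner_left \<rightarrow> 0\<close> that runs around the disc from below gives a simple
  closed polygon. Its topmost (then leftmost) vertex is an interior vertex of the path, where the turn
  is therefore strictly counterclockwise; crossing the edge leaving it shows that the loop winds once
  counterclockwise around some point. Crossing the horizontal bottom edge of the enclosure, which is
  traversed from right to left, shows that it winds once clockwise around another point. A simple closed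
  curve cannot do both.
\<close>

section \<open>Polygonal paths\<close>

fun polyline_image :: "complex list \<Rightarrow> complex set" where
  "polyline_image (a # b # rest) = closed_segment a b \<union> polyline_image (b # rest)"
| "polyline_image _ = {}"

fun polyline_winding :: "complex list \<Rightarrow> complex \<Rightarrow> complex" where
  "polyline_winding (a # b # rest) z = winding_number (linepath a b) z + polyline_winding (b # rest) z"
| "polyline_winding _ z = 0"

lemma pathstart_polypath: "vs \<noteq> [] \<Longrightarrow> pathstart (polypath vs) = hd vs"
  by (induction vs rule: polypath.induct) auto

lemma path_polypath: "path (polypath vs)"
  by (induction vs rule: polypath.induct) (auto simp: pathstart_polypath path_const)

lemma pathfinish_polypath: "vs \<noteq> [] \<Longrightarrow> pathfinish (polypath vs) = last vs"
  by (induction vs rule: polypath.induct) auto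

lemma path_image_polypath: "length vs \<ge> 2 \<Longrightarrow> path_image (polypath vs) = polyline_image vs"
proof (induction vs rule: polypath.induct)
  case (4 a b c rest)
  then show ?case by (simp add: path_image_join pathstart_polypath)
qed auto

lemma winding_number_polypath:
  "length vs \<ge> 2 \<Longrightarrow> z \<notin> polyline_image vs \<Longrightarrow> winding_number (polypath vs) z = polyline_winding vs z"
proof (induction vs rule: polypath.induct)
  case (4 a b c rest)
  then show ?case
    by (simp add: winding_number_join path_polypath pathstart_polypath path_image_polypath)
qed auto

lemma polyline_image_append:
  "polyline_image (xs @ a # ys) = polyline_image (xs @ [a]) \<union> polyline_image (a # ys)"
proof (induction xs)
  case (Cons x xs)
  then show ?case by (cases xs) auto
qed auto

lemma polyline_winding_append:
  "polyline_winding (xs @ a # ys) z = polyline_winding (xs @ [a]) z + polyline_winding (a # ys) z"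
proof (induction xs)
  case (Cons x xs)
  then show ?case by (cases xs) auto
qed auto

lemma polyline_image_append_last:
  "xs \<noteq> [] \<Longrightarrow> polyline_image (xs @ ys) = polyline_image xs \<union> polyline_image (last xs # ys)"
  using polyline_image_append[of "butlast xs" "last xs" ys] append_butlast_last_id[of xs]
  by (metis append.assoc append_Cons append_Nil)

lemma polyline_winding_append_last:
  "xs \<noteq> [] \<Longrightarrow> polyline_winding (xs @ ys) z = polyline_winding xs z + polyline_winding (last xs # ys) z"
  using polyline_winding_append[of "butlast xs" "last xs" ys z] append_butlast_last_id[of xs]
  by (metis append.assoc append_Cons append_Nil)

lemma closed_polyline_image: "closed (polyline_image vs)"
  by (induction vs rule: polyline_image.induct) auto

lemma vertex_in_polyline_image: "length vs \<ge> 2 \<Longrightarrow> x \<in> set vs \<Longrightarrow> x \<in> polyline_image vs"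
proof (induction vs rule: polyline_image.induct)
  case (1 a b rest)
  then show ?case by (cases rest) auto
qed auto

lemma polyline_image_subset_convex: "convex S \<Longrightarrow> set vs \<subseteq> S \<Longrightarrow> polyline_image vs \<subseteq> S"
  by (induction vs rule: polyline_image.induct) (auto dest: closed_segment_subset)

lemma polyline_winding_zero_outside:
  assumes "hd ws = last ws" "length ws \<ge> 2" "convex S" "set ws \<subseteq> S" "z \<notin> S"
  shows "z \<notin> polyline_image ws" "polyline_winding ws z = 0"
proof -
  have image: "path_image (polypath ws) \<subseteq> S"
    using assms(2-4) polyline_image_subset_convex path_image_polypath by metis
  then show "z \<notin> polyline_image ws" using assms(2,5) path_image_polypath by blast
  have "pathfinish (polypath ws) = pathstart (polypath ws)"
    using assms(1,2) pathstart_polypath[of ws] pathfinish_polypath[of ws] by force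
  then have "winding_number (polypath ws) z = 0"
    using winding_number_zero_outside[OF path_polypath assms(3) _ assms(5) image] by blast
  then show "polyline_winding ws z = 0"
    using assms(2) \<open>z \<notin> polyline_image ws\<close> winding_number_polypath by metis
qed

lemma polypath_Cons: "ys \<noteq> [] \<Longrightarrow> polypath (x # y # ys) = linepath x y +++ polypath (y # ys)"
  by (cases ys) auto

lemma arc_polypath_Cons_iff:
  assumes "ys \<noteq> []"
  shows "arc (polypath (x # y # ys)) \<longleftrightarrow>
    arc (linepath x y) \<and> arc (polypath (y # ys)) \<and> closed_segment x y \<inter> polyline_image (y # ys) \<subseteq> {y}"
  using assms arc_join_eq[of "linepath x y" "polypath (y # ys)"]
  by (simp add: polypath_Cons pathstart_polypath path_image_polypath Suc_le_eq)

lemma arc_polypath_append: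
  assumes "arc (polypath (xs @ a # ys))" "xs \<noteq> []" "ys \<noteq> []"
  shows "arc (polypath (xs @ [a])) \<and> arc (polypath (a # ys))
    \<and> polyline_image (xs @ [a]) \<inter> polyline_image (a # ys) \<subseteq> {a}"
  using assms(1,2)
proof (induction xs)
  case (Cons x xs)
  show ?case
  proof (cases xs)
    case Nil
    then show ?thesis using Cons.prems(1) arc_polypath_Cons_iff[OF assms(3)] by simp
  next
    case (Cons y xs')
    have whole: "arc (linepath x y)" "arc (polypath (y # xs' @ a # ys))"
      "closed_segment x y \<inter> polyline_image (y # xs' @ a # ys) \<subseteq> {y}"
      using \<open>arc (polypath ((x # xs) @ a # ys))\<close> arc_polypath_Cons_iff[of "xs' @ a # ys" x y]
      unfolding Cons by auto
    have IH: "arc (polypath (y # xs' @ [a])) \<and> arc (polypath (a # ys))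
        \<and> polyline_image (y # xs' @ [a]) \<inter> polyline_image (a # ys) \<subseteq> {a}"
      using Cons.IH whole(2) unfolding Cons by simp
    have left: "polyline_image (y # xs' @ [a]) \<subseteq> polyline_image (y # xs' @ a # ys)"
      using polyline_image_append[of "y # xs'" a ys] by auto
    have y_left: "y \<in> polyline_image (y # xs' @ [a])"
      by (rule vertex_in_polyline_image) auto
    have "arc (polypath (x # y # xs' @ [a]))"
      using arc_polypath_Cons_iff[of "xs' @ [a]" x y] whole IH left by auto
    moreover have "closed_segment x y \<inter> polyline_image (a # ys) \<subseteq> {a}"
      using whole(3) IH y_left polyline_image_append[of "y # xs'" a ys] by auto
    ultimately show ?thesis using IH unfolding Cons by auto
  qed
qed simp

lemma arc_polypath_vertex:
  assumes "arc (polypath (xs @ [a, b, c] @ ys))"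
  shows "a \<noteq> b" "b \<noteq> c" "closed_segment a b \<inter> closed_segment b c \<subseteq> {b}"
    "b \<notin> polyline_image (xs @ [a])" "b \<notin> polyline_image (c # ys)"
proof -
  have split: "arc (polypath ((xs @ [a]) @ [b])) \<and> arc (polypath (b # c # ys))
      \<and> polyline_image ((xs @ [a]) @ [b]) \<inter> polyline_image (b # c # ys) \<subseteq> {b}"
    by (rule arc_polypath_append) (use assms in auto)
  have "arc (linepath b c) \<and> b \<notin> polyline_image (c # ys)"
  proof (cases "ys = []")
    case False
    then have "arc (linepath b c)" "closed_segment b c \<inter> polyline_image (c # ys) \<subseteq> {c}"
      using split arc_polypath_Cons_iff[of ys b c] by auto
    then show ?thesis using arc_distinct_ends[of "linepath b c"] by auto
  qed (use split in simp)
  then show "b \<noteq> c" "b \<notin> polyline_image (c # ys)" using arc_distinct_ends by fastforce+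
  have "arc (linepath a b) \<and> b \<notin> polyline_image (xs @ [a])"
  proof (cases "xs = []")
    case False
    then have "arc (polypath [a, b])" "polyline_image (xs @ [a]) \<inter> closed_segment a b \<subseteq> {a}"
      using arc_polypath_append[of xs a "[b]"] split by auto
    then show ?thesis using arc_distinct_ends[of "linepath a b"] by auto
  qed (use split in simp)
  then show "a \<noteq> b" "b \<notin> polyline_image (xs @ [a])" using arc_distinct_ends by fastforce+
  show "closed_segment a b \<inter> closed_segment b c \<subseteq> {b}"
    using split polyline_image_append[of xs a "[b]"] by auto
qed

lemma split_at_interior_index:
  assumes "0 < k" "k < length vs - 1"
  shows "vs = take (k - 1) vs @ [vs ! (k - 1), vs ! k, vs ! (k + 1)] @ drop (k + 2) vs"
proof -
  have "drop (k - 1) vs = vs ! (k - 1) # drop k vs"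
    using Cons_nth_drop_Suc[of "k - 1" vs] assms by simp
  also have "drop k vs = vs ! k # vs ! (k + 1) # drop (k + 2) vs"
    using Cons_nth_drop_Suc[of k vs] Cons_nth_drop_Suc[of "Suc k" vs] assms by simp
  finally show ?thesis by (metis append_Cons append_Nil append_take_drop_id)
qed

lemma polypath_map:
  assumes aff: "\<And>a b t. f (a + of_real t * (b - a)) = f a + of_real t * (f b - f a)" and "vs \<noteq> []"
  shows "polypath (map f vs) = f \<circ> polypath vs"
proof -
  have line: "linepath (f a) (f b) = f \<circ> linepath a b" for a b
    using aff by (auto simp: linepath_def scaleR_conv_of_real algebra_simps)
  show ?thesis
    using assms(2) by (induction vs rule: polypath.induct) (auto simp: line joinpaths_def)
qed

section \<open>Segments and orientation\<close>

lemma in_closed_segment_complex: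
  fixes a b x :: complex
  shows "x \<in> closed_segment a b \<longleftrightarrow> (\<exists>t. 0 \<le> t \<and> t \<le> 1 \<and> x = a + of_real t * (b - a))"
  unfolding in_segment by (auto simp: scaleR_conv_of_real algebra_simps)

lemma not_in_closed_segment_cross:
  assumes "Im ((a - b) * cnj (a - z)) \<noteq> 0"
  shows "z \<notin> closed_segment a b"
proof
  assume "z \<in> closed_segment a b"
  then obtain t where "z = a + of_real t * (b - a)"
    unfolding in_closed_segment_complex by blast
  then have "a - z = of_real t * (a - b)" by (simp add: algebra_simps)
  then have "(a - b) * cnj (a - z) = of_real t * ((a - b) * cnj (a - b))"
    by (simp add: mult_ac)
  also have "\<dots> = of_real (t * (cmod (a - b))\<^sup>2)"
    using complex_norm_square[of "a - b"] by simp
  finally show False using assms by (simp only: Im_complex_of_real)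
qed

lemma antiparallel_segments_overlap:
  fixes a b c :: complex
  assumes "c - b = of_real \<mu> * (b - a)" "\<mu> < 0" "b \<noteq> c"
  shows "\<not> closed_segment a b \<inter> closed_segment b c \<subseteq> {b}"
proof -
  define t where "t = 1 / (1 - \<mu>)"
  have "0 < 1 - \<mu>" using assms(2) by simp
  then have t: "0 < t" "t \<le> 1" "0 \<le> - (t * \<mu>)" "- (t * \<mu>) \<le> 1"
    using assms(2) unfolding t_def by (simp_all add: divide_simps)
  define x where "x = b + of_real t * (c - b)"
  have "x \<in> closed_segment b c"
    unfolding x_def in_closed_segment_complex using t(1,2) by (intro exI[of _ t]) simp
  moreover have "x = b + of_real (- (t * \<mu>)) * (a - b)"
    unfolding x_def assms(1) by (simp add: algebra_simps)
  then have "x \<in> closed_segment a b"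
    unfolding closed_segment_commute[of a b] in_closed_segment_complex using t(3,4) by (intro exI[of _ "- (t * \<mu>)"]) simp
  moreover have "x \<noteq> b" using t(1) assms(3) unfolding x_def by simp
  ultimately show ?thesis by blast
qed

lemma orient_similarity: "orient ((a - p) * w) ((b - p) * w) ((c - p) * w) = (cmod w)\<^sup>2 * orient a b c"
proof -
  have "cnj ((b - p) * w - (a - p) * w) * ((c - p) * w - (a - p) * w) = (cnj (b - a) * (c - a)) * (w * cnj w)"
    by (simp add: algebra_simps)
  also have "w * cnj w = of_real ((cmod w)\<^sup>2)" using complex_norm_square[of w] by simp
  finally show ?thesis unfolding orient_def by (simp only:) (simp add: mult.commute)
qed

lemma orient_cnj: "orient (cnj a) (cnj b) (cnj c) = - orient a b c"
  unfolding orient_def by (simp add: algebra_simps)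

section \<open>Crossing an edge\<close>

lemma polyline_winding_replace_edge:
  assumes "z \<notin> closed_segment A B \<union> closed_segment B X \<union> closed_segment X A"
  shows "polyline_winding (xs @ A # B # ys) z
    = polyline_winding (xs @ A # X # B # ys) z + winding_number (linepath A B +++ linepath B X +++ linepath X A) z"
proof -
  have "winding_number (linepath X B) z = - winding_number (linepath B X) z"
    "winding_number (linepath X A) z = - winding_number (linepath A X) z"
    using winding_number_reversepath[of "linepath B X" z] winding_number_reversepath[of "linepath A X" z]
      assms closed_segment_commute[of A X] by auto
  then show ?thesis
    using assms polyline_winding_append[of xs A "B # ys" z] polyline_winding_append[of xs A "X # B # ys" z]
    by (simp add: winding_number_join path_image_join)
qed

text \<open>The point with coordinates \<open>(s, l)\<close> in the frame of the edge from \<open>a\<close> to \<open>b\<close>: parameter \<open>s\<close>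
  along the edge, displaced by \<open>l\<close> edge lengths to its left.\<close>

definition edge_offset :: "complex \<Rightarrow> complex \<Rightarrow> real \<Rightarrow> real \<Rightarrow> complex" where
  "edge_offset a b s l = a + Complex s l * (b - a)"

lemma edge_offset_cross:
  "Im ((edge_offset A B s1 l1 - edge_offset A B s2 l2) * cnj (edge_offset A B s1 l1 - edge_offset A B s3 l3))
    = (cmod (B - A))\<^sup>2 * Im ((Complex s1 l1 - Complex s2 l2) * cnj (Complex s1 l1 - Complex s3 l3))"
proof -
  have "(edge_offset A B s1 l1 - edge_offset A B s2 l2) * cnj (edge_offset A B s1 l1 - edge_offset A B s3 l3)
      = ((Complex s1 l1 - Complex s2 l2) * cnj (Complex s1 l1 - Complex s3 l3)) * ((B - A) * cnj (B - A))"
    by (simp add: edge_offset_def algebra_simps)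
  also have "(B - A) * cnj (B - A) = of_real ((cmod (B - A))\<^sup>2)"
    using complex_norm_square[of "B - A"] by simp
  finally show ?thesis by simp
qed

lemma edge_offset_vertices: "edge_offset A B 0 0 = A" "edge_offset A B 1 0 = B"
  by (simp_all add: edge_offset_def complex_eq_iff)

lemma closed_segment_edge_offsets:
  assumes "x \<in> closed_segment (edge_offset A B s e) (edge_offset A B s (-e))" "0 \<le> e"
  obtains l where "\<bar>l\<bar> \<le> e" "x = edge_offset A B s l"
proof -
  obtain t where t: "0 \<le> t" "t \<le> 1" "x = edge_offset A B s e + of_real t * (edge_offset A B s (-e) - edge_offset A B s e)"
    using assms(1) unfolding in_closed_segment_complex by blast
  have "x = edge_offset A B s (e - 2 * t * e)"
    unfolding t(3) edge_offset_def by (simp add: complex_eq_iff algebra_simps)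
  moreover have "\<bar>e - 2 * t * e\<bar> \<le> e"
    using t assms(2) mult_left_le_one_le[of e t] by (simp add: abs_le_iff mult_nonneg_nonneg)
  ultimately show ?thesis using that by blast
qed

lemma edge_offset_triangle_crosses:
  fixes A B :: complex and s e l :: real
  defines "X \<equiv> edge_offset A B s (-3 * e)" and "n \<equiv> (cmod (B - A))\<^sup>2"
  shows "Im ((A - B) * cnj (A - edge_offset A B s l)) = - n * l"
    and "Im ((B - A) * cnj (B - edge_offset A B s l)) = n * l"
    and "Im ((B - X) * cnj (B - edge_offset A B s l)) = n * ((1 - s) * (l + 3 * e))"
    and "Im ((X - A) * cnj (X - edge_offset A B s l)) = n * (s * (l + 3 * e))"
  using edge_offset_cross[of A B 0 0 1 0 s l, unfolded edge_offset_vertices]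
    edge_offset_cross[of A B 1 0 0 0 s l, unfolded edge_offset_vertices]
    edge_offset_cross[of A B 1 0 s "-3 * e" s l, unfolded edge_offset_vertices]
    edge_offset_cross[of A B s "-3 * e" 0 0 s l, unfolded edge_offset_vertices]
  unfolding X_def n_def by (simp_all add: algebra_simps)

lemma Ints_eq_if_Re_close:
  fixes w :: complex
  assumes "w \<in> \<int>" "\<bar>Re w - of_int k\<bar> < 1"
  shows "w = of_int k"
proof -
  obtain m where m: "w = of_int m" using assms(1) Ints_cases by blast
  then have "\<bar>of_int (m - k)\<bar> < (1::real)" using assms(2) by simp
  then have "m = k" by linarith
  then show ?thesis using m by simp
qed

lemma triangle_winding_edge_offsets:
  assumes "A \<noteq> B" "0 < s" "s < 1" "0 < e"
  defines "X \<equiv> edge_offset A B s (-3 * e)"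
  defines "T \<equiv> linepath A B +++ linepath B X +++ linepath X A"
  shows "\<And>l. \<bar>l\<bar> \<le> e \<Longrightarrow> edge_offset A B s l \<notin> closed_segment B X \<union> closed_segment X A"
    and "\<And>l. l \<noteq> 0 \<Longrightarrow> edge_offset A B s l \<notin> closed_segment A B"
    and "winding_number T (edge_offset A B s e) = 0"
    and "winding_number T (edge_offset A B s (-e)) = -1"
proof -
  have n: "0 < (cmod (B - A))\<^sup>2" using assms(1) by simp
  note crosses = edge_offset_triangle_crosses(1,2)[where A=A and B=B and s=s]
    edge_offset_triangle_crosses(3,4)[where A=A and B=B and s=s and e=e, folded X_def]
  have pos: "0 < Im ((B - X) * cnj (B - edge_offset A B s l))" "0 < Im ((X - A) * cnj (X - edge_offset A B s l))"
    if "\<bar>l\<bar> \<le> e" for l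
    using that assms(2-4) n crosses(3,4)[where l=l] by (simp_all add: abs_le_iff)
  show off_BXA: "edge_offset A B s l \<notin> closed_segment B X \<union> closed_segment X A" if "\<bar>l\<bar> \<le> e" for l
    using pos[OF that] not_in_closed_segment_cross[of B X] not_in_closed_segment_cross[of X A] by force
  show off_AB: "edge_offset A B s l \<notin> closed_segment A B" if "l \<noteq> 0" for l
    using that n crosses(1)[where l=l] not_in_closed_segment_cross[of A B "edge_offset A B s l"] by simp
  have T_sum: "winding_number T z
      = winding_number (linepath A B) z + winding_number (linepath B X) z + winding_number (linepath X A) z"
    and T_int: "winding_number T z \<in> \<int>"
    if "z \<notin> closed_segment A B \<union> closed_segment B X \<union> closed_segment X A" for z
    using that integer_winding_number[of T z]
    by (simp_all add: T_def winding_number_join path_image_join)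
  have half: "\<bar>Re (winding_number (linepath A B) z)\<bar> < 1/2" "\<bar>Re (winding_number (linepath B X) z)\<bar> < 1/2"
    "\<bar>Re (winding_number (linepath X A) z)\<bar> < 1/2"
    if "z \<notin> closed_segment A B \<union> closed_segment B X \<union> closed_segment X A" for z
    using winding_number_lt_half_linepath that by blast+
  have neg: "Re (winding_number (linepath B X) z) < 0" "Re (winding_number (linepath X A) z) < 0"
    if "z = edge_offset A B s l" "\<bar>l\<bar> \<le> e" for z l
    using pos[OF that(2)] winding_number_linepath_neg_lt that(1) by blast+
  show "winding_number T (edge_offset A B s e) = 0"
  proof -
    let ?z = "edge_offset A B s e"
    have off: "?z \<notin> closed_segment A B \<union> closed_segment B X \<union> closed_segment X A"
      using off_AB[of e] off_BXA[of e] assms(4) by auto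
    have "0 < Re (winding_number (linepath A B) ?z)"
      by (rule winding_number_linepath_pos_lt) (use n assms(4) crosses(2)[where l=e] in simp)
    then have "\<bar>Re (winding_number T ?z) - of_int 0\<bar> < 1"
      using neg[of ?z e] half[OF off] assms(4) T_sum[OF off] by auto
    then show ?thesis using Ints_eq_if_Re_close[OF T_int[OF off], of 0] by simp
  qed
  show "winding_number T (edge_offset A B s (-e)) = -1"
  proof -
    let ?z = "edge_offset A B s (-e)"
    have off: "?z \<notin> closed_segment A B \<union> closed_segment B X \<union> closed_segment X A"
      using off_AB[of "-e"] off_BXA[of "-e"] assms(4) by auto
    have "Re (winding_number (linepath A B) ?z) < 0"
      by (rule winding_number_linepath_neg_lt) (use n assms(4) crosses(1)[where l="-e"] in simp)
    then have "\<bar>Re (winding_number T ?z) - of_int (-1)\<bar> < 1"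
      using neg[of ?z "-e"] half[OF off] assms(4) T_sum[OF off] by auto
    then show ?thesis using Ints_eq_if_Re_close[OF T_int[OF off], of "-1"] by simp
  qed
qed

lemma polyline_winding_edge_jump:
  fixes xs ys :: "complex list" and A B :: complex
  defines "ws \<equiv> xs @ A # B # ys"
  assumes closed: "hd ws = last ws"
    and "A \<noteq> B" "0 < s" "s < 1" "0 < e"
    and probe: "closed_segment (edge_offset A B s e) (edge_offset A B s (-e))
      \<inter> (polyline_image (xs @ [A]) \<union> polyline_image (B # ys)) = {}"
  shows "polyline_winding ws (edge_offset A B s e) = polyline_winding ws (edge_offset A B s (-e)) + 1"
    and "edge_offset A B s e \<notin> polyline_image ws" "edge_offset A B s (-e) \<notin> polyline_image ws"
proof -
  \<comment> \<open>Detour the edge through \<open>X\<close> to its right: the detoured loop winds equally around both probe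
    points, and the triangle \<open>A B X\<close> accounts for the difference.\<close>
  define X where "X = edge_offset A B s (-3 * e)"
  define T where "T = linepath A B +++ linepath B X +++ linepath X A"
  define ws' where "ws' = xs @ A # X # B # ys"
  note tri = triangle_winding_edge_offsets[OF assms(3-6), folded X_def T_def]
  let ?P = "closed_segment (edge_offset A B s e) (edge_offset A B s (-e))"
  have img: "polyline_image ws = polyline_image (xs @ [A]) \<union> closed_segment A B \<union> polyline_image (B # ys)"
    "polyline_image ws' = polyline_image (xs @ [A]) \<union> closed_segment A X \<union> closed_segment X B \<union> polyline_image (B # ys)"
    using polyline_image_append[of xs A "B # ys"] polyline_image_append[of xs A "X # B # ys"]
    unfolding ws_def ws'_def by auto
  have probe_tri: "?P \<inter> (closed_segment B X \<union> closed_segment X A) = {}"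
    using tri(1) closed_segment_edge_offsets[of _ A B s e] assms(6) by (metis disjoint_iff less_imp_le)
  have "?P \<inter> path_image (polypath ws') = {}"
    using probe probe_tri img(2) path_image_polypath[of ws'] closed_segment_commute[of A X] closed_segment_commute[of X B]
    unfolding ws'_def by auto
  moreover have "pathfinish (polypath ws') = pathstart (polypath ws')"
    using closed unfolding ws_def ws'_def by (cases xs) (simp_all add: pathstart_polypath pathfinish_polypath)
  ultimately have "winding_number (polypath ws') (edge_offset A B s e) = winding_number (polypath ws') (edge_offset A B s (-e))"
    using winding_number_eq[OF path_polypath] by blast
  moreover have "z \<notin> polyline_image ws'" if "z \<in> ?P" for z
    using \<open>?P \<inter> path_image (polypath ws') = {}\<close> that path_image_polypath[of ws'] unfolding ws'_def by auto
  ultimately have same: "polyline_winding ws' (edge_offset A B s e) = polyline_winding ws' (edge_offset A B s (-e))"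
    using winding_number_polypath[of ws'] unfolding ws'_def by auto
  have off: "z \<notin> closed_segment A B \<union> closed_segment B X \<union> closed_segment X A"
    if "z \<in> {edge_offset A B s e, edge_offset A B s (-e)}" for z
    using that tri(1)[of e] tri(1)[of "-e"] tri(2)[of e] tri(2)[of "-e"] assms(6) by auto
  show "polyline_winding ws (edge_offset A B s e) = polyline_winding ws (edge_offset A B s (-e)) + 1"
    using polyline_winding_replace_edge[OF off, of _ xs ys] same tri(3,4) unfolding ws_def ws'_def T_def by simp
  show "edge_offset A B s e \<notin> polyline_image ws" "edge_offset A B s (-e) \<notin> polyline_image ws"
    using probe off img(1) by auto
qed

section \<open>The topmost vertex\<close>

lemma finite_top_left_point:
  fixes S :: "complex set"
  assumes "finite S" "S \<noteq> {}"
  obtains b where "b \<in> S" "\<And>x. x \<in> S \<Longrightarrow> Im x \<le> Im b" "\<And>x. x \<in> S \<Longrightarrow> Im x = Im b \<Longrightarrow> Re b \<le> Re x"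
proof -
  define T where "T = {x \<in> S. Im x = Max (Im ` S)}"
  have "Max (Im ` S) \<in> Im ` S" using assms by simp
  then have T: "finite T" "T \<noteq> {}" using assms(1) unfolding T_def by auto
  then have "Min (Re ` T) \<in> Re ` T" by simp
  then obtain b where b: "b \<in> T" "Re b = Min (Re ` T)" by auto
  show thesis
  proof (rule that)
    show "b \<in> S" using b(1) unfolding T_def by simp
    show top: "Im x \<le> Im b" if "x \<in> S" for x
      using b(1) that assms(1) unfolding T_def by simp
    show "Re b \<le> Re x" if "x \<in> S" "Im x = Im b" for x
    proof -
      have "x \<in> T" using that b(1) unfolding T_def by simp
      then show ?thesis using b(2) T(1) by simp
    qed
  qed
qed

lemma top_left_vertex_interior:
  assumes len: "length vs \<ge> 2" and ends: "Im (hd vs) < Im q" "Im (last vs) < Im q"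
    and q: "q \<in> polyline_image vs"
  obtains xs b ys k where "vs = xs @ [vs ! (k - 1), b, vs ! (k + 1)] @ ys" "0 < k" "k < length vs - 1" "vs ! k = b"
    "Im q \<le> Im b" "\<And>x. x \<in> set vs \<Longrightarrow> Im x \<le> Im b" "\<And>x. x \<in> set vs \<Longrightarrow> Im x = Im b \<Longrightarrow> Re b \<le> Re x"
proof -
  obtain b where b: "b \<in> set vs" and top: "\<And>x. x \<in> set vs \<Longrightarrow> Im x \<le> Im b"
    and leftmost: "\<And>x. x \<in> set vs \<Longrightarrow> Im x = Im b \<Longrightarrow> Re b \<le> Re x"
    by (rule finite_top_left_point[of "set vs"]) (use len in auto)
  have "polyline_image vs \<subseteq> {x. Im x \<le> Im b}"
    using top by (intro polyline_image_subset_convex convex_halfspace_Im_le) auto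
  then have high: "Im q \<le> Im b" using q by blast
  obtain k where k: "k < length vs" "vs ! k = b" using b by (auto simp: in_set_conv_nth)
  have "vs \<noteq> []" using len by auto
  then have "Im (vs ! 0) < Im b" "Im (vs ! (length vs - 1)) < Im b"
    using ends high by (simp_all add: hd_conv_nth last_conv_nth)
  then have "k \<noteq> 0" "k \<noteq> length vs - 1" using k(2) by (metis less_irrefl)+
  then have k_interior: "0 < k" "k < length vs - 1" using k(1) by auto
  show thesis
    using that[OF split_at_interior_index[OF k_interior, unfolded k(2)] k_interior k(2) high top leftmost] .
qed

lemma top_vertex_turn:
  fixes a b c :: complex
  assumes "a \<noteq> b" "b \<noteq> c" "closed_segment a b \<inter> closed_segment b c \<subseteq> {b}"
    and "Im a \<le> Im b" "Im c \<le> Im b" "Im a = Im b \<Longrightarrow> Re b < Re a" "Im c = Im b \<Longrightarrow> Re b < Re c"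
    and "0 \<le> orient a b c"
  shows "Im c < Im b" "0 < orient a b c"
proof -
  define F where "F = b - a"
  define E where "E = c - b"
  have turn: "orient a b c = Re F * Im E - Im F * Re E"
    unfolding orient_def F_def E_def by (simp add: algebra_simps)
  have antiparallel: False if "E = of_real \<mu> * F" "\<mu> < 0" for \<mu>
    using antiparallel_segments_overlap[of c b \<mu> a] assms(2,3) that unfolding E_def F_def by simp
  show E_down: "Im c < Im b"
  proof (rule ccontr)
    assume "\<not> Im c < Im b"
    then have E0: "Im E = 0" and RE: "0 < Re E" using assms(5,7) unfolding E_def by auto
    then have "Im F * Re E \<le> 0" using assms(8) turn by simp
    then have F0: "Im F = 0" using assms(4) RE unfolding F_def by (simp add: mult_le_0_iff)
    then have RF: "Re F < 0" using assms(6) unfolding F_def by simp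
    have "E = of_real (Re E / Re F) * F" using E0 F0 RF by (simp add: complex_eq_iff)
    moreover have "Re E / Re F < 0" using RE RF by (simp add: divide_pos_neg)
    ultimately show False using antiparallel by blast
  qed
  show "0 < orient a b c"
  proof (rule ccontr)
    assume "\<not> 0 < orient a b c"
    then have c0: "Re F * Im E = Im F * Re E" using assms(8) turn by simp
    have IE: "Im E < 0" using E_down unfolding E_def by simp
    have "Im F \<noteq> 0"
    proof
      assume "Im F = 0"
      then have "F = 0" using c0 IE by (simp add: complex_eq_iff)
      then show False using assms(1) unfolding F_def by simp
    qed
    then have IF: "0 < Im F" using assms(4) unfolding F_def by simp
    have "E = of_real (Im E / Im F) * F"
    proof (rule complex_eqI)
      show "Re E = Re (of_real (Im E / Im F) * F)" using c0 IF by (simp add: field_simps)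
      show "Im E = Im (of_real (Im E / Im F) * F)" using IF by simp
    qed
    moreover have "Im E / Im F < 0" using IE IF by (simp add: divide_neg_pos)
    ultimately show False using antiparallel by blast
  qed
qed

lemma edge_offset_probe_near_vertex:
  fixes a b c :: complex
  defines "D \<equiv> Re (cnj (b - a) * (c - b))"
  assumes "0 < s" "0 < e" "e \<le> s / 2" "s * cmod (c - b) \<le> \<rho> / 4" "e * \<bar>D\<bar> < s * orient a b c" "0 < \<rho>"
    and x: "x \<in> closed_segment (edge_offset b c s e) (edge_offset b c s (-e))"
  shows "x \<in> ball b \<rho>" "x \<notin> closed_segment a b"
proof -
  obtain l where l: "\<bar>l\<bar> \<le> e" "x = edge_offset b c s l"
    using closed_segment_edge_offsets[OF x less_imp_le[OF assms(3)]] by blast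
  have "cmod (Complex s l) \<le> 3/2 * s"
    using cmod_le[of "Complex s l"] l(1) assms(2,4) by simp
  then have "cmod (Complex s l) * cmod (c - b) \<le> 3/2 * s * cmod (c - b)"
    by (rule mult_right_mono) simp
  then show "x \<in> ball b \<rho>"
    using l(2) assms(5,7) by (simp add: edge_offset_def dist_norm norm_mult)
  have "\<bar>l * D\<bar> \<le> e * \<bar>D\<bar>" using l(1) by (simp add: abs_mult mult_right_mono)
  moreover have "Im ((b - a) * cnj (b - x)) = s * orient a b c + l * D"
    unfolding l(2) D_def orient_def edge_offset_def by (simp add: algebra_simps)
  ultimately have "Im ((b - a) * cnj (b - x)) \<noteq> 0" using assms(6) abs_ge_minus_self[of "l * D"] by linarith
  then have "x \<notin> closed_segment b a" by (rule not_in_closed_segment_cross)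
  then show "x \<notin> closed_segment a b" using closed_segment_commute[of a b] by blast
qed

lemma probe_near_vertex:
  fixes a b c :: complex
  assumes "b \<noteq> c" "0 < orient a b c" "0 < \<rho>"
  obtains s e where "0 < s" "s < 1" "0 < e"
    "closed_segment (edge_offset b c s e) (edge_offset b c s (-e)) \<subseteq> ball b \<rho>"
    "closed_segment (edge_offset b c s e) (edge_offset b c s (-e)) \<inter> closed_segment a b = {}"
proof -
  define \<kappa> where "\<kappa> = orient a b c"
  define D where "D = Re (cnj (b - a) * (c - b))"
  define s where "s = min (1/2) (\<rho> / (4 * cmod (c - b)))"
  define e where "e = s * \<kappa> / (2 * (\<bar>D\<bar> + \<kappa>))"
  have \<kappa>: "0 < \<kappa>" using assms(2) by (simp add: \<kappa>_def)
  have s: "0 < s" "s < 1" "s * cmod (c - b) \<le> \<rho> / 4"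
    unfolding s_def using assms(1,3) by (auto simp: min_def field_simps)
  have "\<kappa> / (2 * (\<bar>D\<bar> + \<kappa>)) \<le> 1/2" "\<bar>D\<bar> / (2 * (\<bar>D\<bar> + \<kappa>)) \<le> 1/2"
    using \<kappa> by (simp_all add: field_simps)
  then have bounds: "s * (\<kappa> / (2 * (\<bar>D\<bar> + \<kappa>))) \<le> s * (1/2)"
    "(s * \<kappa>) * (\<bar>D\<bar> / (2 * (\<bar>D\<bar> + \<kappa>))) \<le> (s * \<kappa>) * (1/2)"
    using s \<kappa> by (intro mult_left_mono; simp)+
  have "e * \<bar>D\<bar> = (s * \<kappa>) * (\<bar>D\<bar> / (2 * (\<bar>D\<bar> + \<kappa>)))" unfolding e_def by simp
  moreover have "0 < s * \<kappa>" using s(1) \<kappa> by simp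
  ultimately have "e * \<bar>D\<bar> < s * \<kappa>" using bounds(2) by linarith
  moreover have "0 < e" "e \<le> s / 2" using bounds(1) s \<kappa> unfolding e_def by (simp_all add: add_nonneg_pos)
  ultimately have e: "0 < e" "e \<le> s / 2" "e * \<bar>D\<bar> < s * \<kappa>" by simp_all
  note probe = edge_offset_probe_near_vertex[OF s(1) e(1,2) s(3) e(3)[unfolded D_def \<kappa>_def] assms(3)]
  show thesis using that[OF s(1,2) e(1)] probe by blast
qed

lemma corner_not_right_of_edge:
  assumes "0 \<le> orient a b c" "x \<in> closed_segment a b \<union> closed_segment b c"
  shows "0 \<le> Im (cnj (c - b) * (x - b))"
  using assms(2)
proof
  assume "x \<in> closed_segment a b"
  then obtain t where t: "t \<le> 1" "x = a + of_real t * (b - a)"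
    unfolding in_closed_segment_complex by blast
  have "Im (cnj (c - b) * (x - b)) = (1 - t) * orient a b c"
    unfolding t(2) orient_def by (simp add: algebra_simps)
  then show ?thesis using t(1) assms(1) by simp
next
  assume "x \<in> closed_segment b c"
  then obtain t where t: "x = b + of_real t * (c - b)"
    unfolding in_closed_segment_complex by blast
  have "cnj (c - b) * (x - b) = of_real t * ((c - b) * cnj (c - b))"
    unfolding t by (simp add: mult_ac)
  also have "\<dots> = of_real (t * (cmod (c - b))\<^sup>2)"
    using complex_norm_square[of "c - b"] by simp
  finally show ?thesis by (simp only: Im_complex_of_real order_refl)
qed

lemma point_above_right_of_edge:
  assumes "Im E < 0" "0 < \<rho>"
  obtains z where "z \<in> ball b \<rho>" "Im (cnj E * (z - b)) < 0" "Im b < Im z"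
proof -
  define \<mu> where "\<mu> = (\<bar>Re E\<bar> + 1) / (- Im E)"
  define \<tau> where "\<tau> = \<rho> / (2 * (\<mu> + 1))"
  define z where "z = b + of_real \<tau> * Complex (-\<mu>) 1"
  have \<mu>: "0 < \<mu>" "\<mu> * Im E = - (\<bar>Re E\<bar> + 1)"
    using assms(1) unfolding \<mu>_def by (auto simp: field_simps)
  have \<tau>: "0 < \<tau>" "\<tau> * (\<mu> + 1) = \<rho> / 2"
    unfolding \<tau>_def using \<mu>(1) assms(2) by (simp_all add: field_simps)
  have "cmod (of_real \<tau> * Complex (-\<mu>) 1) \<le> \<tau> * (\<mu> + 1)"
    using cmod_le[of "Complex (-\<mu>) 1"] \<mu>(1) \<tau>(1) by (simp add: norm_mult)
  then have "z \<in> ball b \<rho>" using \<tau>(2) assms(2) unfolding z_def by (simp add: dist_norm)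
  moreover have "Im (cnj E * (z - b)) = \<tau> * (Re E + \<mu> * Im E)"
    unfolding z_def by (simp add: algebra_simps)
  moreover have "\<tau> * (Re E + \<mu> * Im E) < 0" using \<mu>(2) \<tau>(1) by (simp add: mult_pos_neg abs_if)
  moreover have "Im b < Im z" using \<tau>(1) unfolding z_def by simp
  ultimately show thesis using that by simp
qed

lemma polyline_winding_zero_right_of_top_edge:
  fixes xs ys :: "complex list" and a b c z :: complex
  defines "ws \<equiv> xs @ [a, b, c] @ ys"
  assumes closed: "hd ws = last ws"
    and top: "\<And>x. x \<in> set ws \<Longrightarrow> Im x \<le> Im b"
    and down: "Im c < Im b" and turn: "0 < orient a b c"
    and isolated: "ball b \<rho> \<inter> (polyline_image (xs @ [a]) \<union> polyline_image (c # ys)) = {}"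
    and z: "z \<in> ball b \<rho>" "Im (cnj (c - b) * (z - b)) < 0"
  shows "z \<notin> polyline_image ws \<and> polyline_winding ws z = 0"
proof -
  \<comment> \<open>The half-disc right of the edge leaving \<open>b\<close> misses the polygon and reaches above all vertices.\<close>
  define E where "E = c - b"
  define U where "U = ball b \<rho> \<inter> {x. Im (cnj E * (x - b)) < 0}"
  have "{x. Im (cnj E * (x - b)) < 0} = {x. inner (\<i> * E) x < inner (\<i> * E) b}"
    by (auto simp: inner_complex_def algebra_simps)
  then have "convex U" unfolding U_def by (simp add: convex_Int convex_halfspace_lt)
  have img: "polyline_image ws = polyline_image (xs @ [a]) \<union> closed_segment a b \<union> closed_segment b c \<union> polyline_image (c # ys)"
    using polyline_image_append[of xs a "[b, c] @ ys"] unfolding ws_def by auto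
  have "Im (cnj E * (x - b)) \<ge> 0" if "x \<in> closed_segment a b \<union> closed_segment b c" for x
    using corner_not_right_of_edge[OF less_imp_le[OF turn] that] unfolding E_def .
  then have U_img: "U \<inter> polyline_image ws = {}"
    using isolated img unfolding U_def by fastforce
  have \<rho>: "0 < \<rho>" using z(1) zero_le_dist[of b z] by (simp only: mem_ball)
  obtain zs where "zs \<in> U" and zs_high: "Im b < Im zs"
    using point_above_right_of_edge[of E \<rho> b] down \<rho> unfolding U_def E_def by auto
  moreover have "z \<in> U" using z unfolding U_def E_def by simp
  moreover have "pathfinish (polypath ws) = pathstart (polypath ws)"
    using closed unfolding ws_def by (simp add: pathstart_polypath pathfinish_polypath)
  moreover have "path_image (polypath ws) = polyline_image ws"
    by (rule path_image_polypath) (simp add: ws_def)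
  ultimately have "winding_number (polypath ws) z = winding_number (polypath ws) zs"
    using winding_number_eq[OF path_polypath] \<open>convex U\<close> convex_connected U_img by metis
  moreover have "zs \<notin> polyline_image ws" "z \<notin> polyline_image ws" using U_img \<open>zs \<in> U\<close> \<open>z \<in> U\<close> by auto
  ultimately have "polyline_winding ws z = polyline_winding ws zs"
    using winding_number_polypath[of ws] unfolding ws_def by simp
  also have "\<dots> = 0"
    using polyline_winding_zero_outside[OF closed _ convex_halfspace_Im_le, of "Im b" zs] top zs_high
    unfolding ws_def by auto
  finally show ?thesis using \<open>z \<notin> polyline_image ws\<close> by simp
qed

lemma polyline_winding_one_at_top_vertex:
  fixes xs ys :: "complex list" and a b c :: complex
  defines "ws \<equiv> xs @ [a, b, c] @ ys"
  assumes closed: "hd ws = last ws"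
    and top: "\<And>x. x \<in> set ws \<Longrightarrow> Im x \<le> Im b"
    and leftmost: "\<And>x. x \<in> set ws \<Longrightarrow> Im x = Im b \<Longrightarrow> Re b \<le> Re x"
    and simple: "a \<noteq> b" "b \<noteq> c" "closed_segment a b \<inter> closed_segment b c \<subseteq> {b}"
      "b \<notin> polyline_image (xs @ [a]) \<union> polyline_image (c # ys)"
    and turn: "0 \<le> orient a b c"
  obtains z where "z \<notin> polyline_image ws" "polyline_winding ws z = 1"
proof -
  have ac: "a \<in> set ws" "c \<in> set ws" unfolding ws_def by auto
  have "Re b < Re x" if "x \<in> {a, c}" "Im x = Im b" for x
    using that leftmost ac simple(1,2) by (fastforce simp: complex_eq_iff)
  then have down: "Im c < Im b" and left_turn: "0 < orient a b c"
    using top_vertex_turn[OF simple(1-3) top[OF ac(1)] top[OF ac(2)] _ _ turn] by auto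
  define rest where "rest = polyline_image (xs @ [a]) \<union> polyline_image (c # ys)"
  have "open (- rest)" unfolding rest_def by (intro open_Compl closed_Un closed_polyline_image)
  then obtain \<rho> where \<rho>: "0 < \<rho>" "ball b \<rho> \<inter> rest = {}"
    using simple(4) open_contains_ball[of "- rest"] unfolding rest_def by blast
  obtain s e where se: "0 < s" "s < 1" "0 < e"
    and probe_ball: "closed_segment (edge_offset b c s e) (edge_offset b c s (-e)) \<subseteq> ball b \<rho>"
    and probe_ab: "closed_segment (edge_offset b c s e) (edge_offset b c s (-e)) \<inter> closed_segment a b = {}"
    using probe_near_vertex[OF simple(2) left_turn \<rho>(1)] by blast
  have ws: "ws = (xs @ [a]) @ b # c # ys" unfolding ws_def by simp
  have "polyline_image ((xs @ [a]) @ [b]) = polyline_image (xs @ [a]) \<union> closed_segment a b"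
    using polyline_image_append[of xs a "[b]"] by simp
  then have probe: "closed_segment (edge_offset b c s e) (edge_offset b c s (-e))
      \<inter> (polyline_image ((xs @ [a]) @ [b]) \<union> polyline_image (c # ys)) = {}"
    using probe_ball probe_ab \<rho>(2) unfolding rest_def by blast
  note jump = polyline_winding_edge_jump[OF closed[unfolded ws] simple(2) se probe, folded ws]
  have "edge_offset b c s (-e) \<in> ball b \<rho>" using probe_ball by auto
  moreover have "Im (cnj (c - b) * (edge_offset b c s (-e) - b)) < 0"
  proof -
    have "cnj (c - b) * (edge_offset b c s (-e) - b) = Complex s (-e) * ((c - b) * cnj (c - b))"
      by (simp add: edge_offset_def algebra_simps)
    also have "\<dots> = Complex s (-e) * of_real ((cmod (c - b))\<^sup>2)"
      by (simp only: complex_norm_square)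
    finally have "Im (cnj (c - b) * (edge_offset b c s (-e) - b)) = - e * (cmod (c - b))\<^sup>2"
      by simp
    then show ?thesis using se(3) simple(2) by simp
  qed
  ultimately have "polyline_winding ws (edge_offset b c s (-e)) = 0"
    using polyline_winding_zero_right_of_top_edge[of xs a b c ys, folded ws_def, OF closed top down left_turn]
      \<rho>(2) unfolding rest_def by blast
  then show thesis using that jump(1,2) by simp
qed

section \<open>Polygonal chords of a circle\<close>

lemma dist_gt_radius_outward:
  fixes c v w :: complex
  assumes "dist c v = R" "0 \<le> Re (cnj (v - c) * w)" "w \<noteq> 0" "0 < t"
  shows "R < dist c (v + of_real t * w)"
proof -
  have "R\<^sup>2 = (Re (c - v))\<^sup>2 + (Im (c - v))\<^sup>2"
    using assms(1) cmod_power2[of "c - v"] by (simp add: dist_norm)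
  moreover have "(dist c (v + of_real t * w))\<^sup>2 = (Re (c - v) - t * Re w)\<^sup>2 + (Im (c - v) - t * Im w)\<^sup>2"
    by (simp only: dist_norm cmod_power2) (simp add: algebra_simps)
  ultimately have "(dist c (v + of_real t * w))\<^sup>2
      = R\<^sup>2 + 2 * t * Re (cnj (v - c) * w) + t\<^sup>2 * ((Re w)\<^sup>2 + (Im w)\<^sup>2)"
    by (simp add: power2_eq_square algebra_simps)
  moreover have "0 < t\<^sup>2 * ((Re w)\<^sup>2 + (Im w)\<^sup>2)" using assms(3,4) by (simp add: complex_neq_0)
  moreover have "0 \<le> 2 * t * Re (cnj (v - c) * w)" using assms(2,4) by simp
  ultimately have "R\<^sup>2 < (dist c (v + of_real t * w))\<^sup>2" by linarith
  then show ?thesis by (rule power_less_imp_less_base) simp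
qed

lemma arc_image_subset_cball:
  fixes g :: "real \<Rightarrow> 'a::real_normed_vector"
  assumes "arc g" "q \<in> path_image g" "q \<in> ball c R"
    and ends: "path_image g \<inter> sphere c R = {pathstart g, pathfinish g}"
  shows "path_image g \<subseteq> cball c R"
proof -
  define S where "S = g ` {0<..<1}"
  have inj: "inj_on g {0..1}" using assms(1) by (simp add: arc_def)
  have "connected S"
    unfolding S_def using assms(1) arc_imp_path[of g]
    by (intro connected_continuous_image connected_Ioo) (auto simp: path_def intro: continuous_on_subset)
  have S_sphere: "S \<inter> sphere c R = {}"
  proof -
    have "g t \<notin> {g 0, g 1}" if "t \<in> {0<..<1}" for t
      using that inj_onD[OF inj, of t 0] inj_onD[OF inj, of t 1] by auto
    moreover have "g t \<in> path_image g" if "t \<in> {0<..<1}" for t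
      using that unfolding path_image_def by auto
    ultimately show ?thesis using ends unfolding S_def pathstart_def pathfinish_def by blast
  qed
  have image: "path_image g = S \<union> {pathstart g, pathfinish g}"
    unfolding S_def path_image_def pathstart_def pathfinish_def
    by (auto simp: image_iff) (metis atLeastAtMost_iff greaterThanLessThan_iff less_eq_real_def)
  have R: "0 < R" using assms(3) zero_le_dist[of c q] by (simp only: mem_ball)
  have "q \<in> S" using assms(2,3) ends image by auto
  have "S \<subseteq> ball c R"
  proof (rule ccontr)
    assume "\<not> S \<subseteq> ball c R"
    then have "S \<inter> frontier (ball c R) \<noteq> {}"
      using connected_Int_frontier[OF \<open>connected S\<close>] \<open>q \<in> S\<close> assms(3) by blast
    then show False using S_sphere R by simp
  qed
  then show ?thesis using image ends by auto
qed

lemma simple_closed_path_winding_numbers_agree: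
  assumes "simple_path \<gamma>" "pathfinish \<gamma> = pathstart \<gamma>"
    and "z \<notin> path_image \<gamma>" "winding_number \<gamma> z = 1"
    and "w \<notin> path_image \<gamma>" "winding_number \<gamma> w = -1"
  shows False
proof -
  have inside: "x \<in> inside (path_image \<gamma>)" if "x \<notin> path_image \<gamma>" "winding_number \<gamma> x \<noteq> 0" for x
    using that inside_Un_outside[of "path_image \<gamma>"]
      winding_number_zero_in_outside[OF simple_path_imp_path[OF assms(1)] assms(2)] by blast
  show False
    by (rule simple_closed_path_winding_number_inside[OF assms(1)])
      (use inside assms(3-6) in force)+
qed

definition polygonal_chord :: "complex \<Rightarrow> real \<Rightarrow> complex \<Rightarrow> complex list \<Rightarrow> bool" where
  "polygonal_chord c R q vs \<longleftrightarrow> length vs \<ge> 2 \<and> arc (polypath vs) \<and> q \<in> ball c R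
     \<and> q \<in> path_image (polypath vs) \<and> path_image (polypath vs) \<inter> sphere c R = {hd vs, last vs}"

lemma polygonal_chord_image:
  assumes "polygonal_chord c R q vs"
  shows "polyline_image vs \<subseteq> cball c R"
proof -
  have "vs \<noteq> []" and len: "length vs \<ge> 2" using assms unfolding polygonal_chord_def by auto
  then show ?thesis
    using assms arc_image_subset_cball[of "polypath vs" q c R]
    unfolding polygonal_chord_def path_image_polypath[OF len] by (simp add: pathstart_polypath pathfinish_polypath)
qed

lemma polygonal_chord_map:
  fixes f :: "complex \<Rightarrow> complex" and k :: real
  assumes aff: "\<And>a b t. f (a + of_real t * (b - a)) = f a + of_real t * (f b - f a)"
    and scale: "\<And>x y. dist (f x) (f y) = k * dist x y" and "0 < k"
    and chord: "polygonal_chord c R q vs"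
  shows "polygonal_chord (f c) (k * R) (f q) (map f vs)"
proof -
  have vs: "length vs \<ge> 2" "vs \<noteq> []" "arc (polypath vs)" using chord unfolding polygonal_chord_def by auto
  have inj: "inj f" using scale \<open>0 < k\<close> by (intro injI) (metis dist_eq_0_iff mult_eq_0_iff less_irrefl)
  have "continuous_on UNIV f"
    unfolding continuous_on_iff using scale \<open>0 < k\<close>
    by (metis divide_pos_pos mult.commute pos_less_divide_eq UNIV_I)
  then have "arc (f \<circ> polypath vs)"
    using vs(3) inj unfolding arc_def
    by (auto intro: path_continuous_image continuous_on_subset comp_inj_on inj_on_subset)
  moreover have sphere: "f x \<in> sphere (f c) (k * R) \<longleftrightarrow> x \<in> sphere c R"
    and ball: "f x \<in> ball (f c) (k * R) \<longleftrightarrow> x \<in> ball c R" for x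
    using scale \<open>0 < k\<close> by simp_all
  moreover have "path_image (f \<circ> polypath vs) \<inter> sphere (f c) (k * R) = f ` (path_image (polypath vs) \<inter> sphere c R)"
    using sphere by (auto simp: path_image_compose)
  ultimately show ?thesis
    using chord vs(2) unfolding polygonal_chord_def polypath_map[OF aff vs(2)]
    by (simp add: path_image_compose hd_map last_map)
qed

locale circle_through_0_1 =
  fixes c :: complex and R :: real
  assumes zero_on_circle: "0 \<in> sphere c R" and one_on_circle: "1 \<in> sphere c R"
begin

lemma Re_center: "Re c = 1/2"
proof -
  have "(cmod c)\<^sup>2 = (cmod (c - 1))\<^sup>2"
    using zero_on_circle one_on_circle by (simp add: dist_norm norm_minus_commute)
  then have "(Re c)\<^sup>2 + (Im c)\<^sup>2 = (Re c - 1)\<^sup>2 + (Im c)\<^sup>2" by (simp only: cmod_power2) simp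
  then show ?thesis by (simp add: power2_eq_square algebra_simps)
qed

text \<open>The enclosure \<open>1 \<rightarrow> corner_right \<rightarrow> corner_left \<rightarrow> 0\<close> closes a chord from \<open>0\<close> to \<open>1\<close> below the
  disc; \<open>width\<close> is chosen so that both slanted edges point away from the centre (\<open>outward_slope\<close>).\<close>

definition depth :: real where "depth = \<bar>Im c\<bar> + R + 1"
definition width :: real where "width = 2 * (depth * \<bar>Im c\<bar> + 1)"
definition corner_right :: complex where "corner_right = 1 + Complex width (- depth)"
definition corner_left :: complex where "corner_left = Complex (- width) (- depth)"

abbreviation enclosure :: "complex list" where "enclosure \<equiv> [1, corner_right, corner_left, 0]"

abbreviation chord_loop :: "complex list \<Rightarrow> complex list" where
  "chord_loop vs \<equiv> vs @ [corner_right, corner_left, 0]"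

lemma depth_pos: "0 < depth"
  using zero_on_circle zero_le_dist[of c 0] unfolding depth_def by simp

lemma width_pos: "0 < width"
  using depth_pos unfolding width_def by (simp add: add_nonneg_pos)

lemma Im_cball: "x \<in> cball c R \<Longrightarrow> 1 - depth \<le> Im x"
  using abs_Im_le_cmod[of "c - x"] unfolding depth_def by (simp add: dist_norm)

lemma outward_slope: "1 \<le> width / 2 + depth * Im c"
proof -
  have "- (depth * Im c) \<le> depth * \<bar>Im c\<bar>"
    using mult_left_mono[of "- Im c" "\<bar>Im c\<bar>" depth] depth_pos by simp
  moreover have "width / 2 = depth * \<bar>Im c\<bar> + 1" unfolding width_def by simp
  ultimately show ?thesis by linarith
qed

lemma right_edge:
  assumes "x \<in> closed_segment 1 corner_right"
  obtains t where "0 \<le> t" "t \<le> 1" "x = 1 + of_real t * Complex width (- depth)"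
  using assms unfolding in_closed_segment_complex corner_right_def by auto

lemma Re_right_edge: "x \<in> closed_segment 1 corner_right \<Longrightarrow> 1 \<le> Re x"
  using width_pos by (elim right_edge) simp

lemma bottom_edge: "x \<in> closed_segment corner_right corner_left \<Longrightarrow> Im x = - depth"
  unfolding in_closed_segment_complex corner_right_def corner_left_def by auto

lemma left_edge:
  assumes "x \<in> closed_segment corner_left 0"
  obtains t where "0 \<le> t" "t \<le> 1" "x = of_real t * corner_left"
proof -
  obtain t where "0 \<le> t" "t \<le> 1" "x = corner_left + of_real t * (0 - corner_left)"
    using assms unfolding in_closed_segment_complex by blast
  then show thesis using that[of "1 - t"] by (simp add: algebra_simps)
qed

lemma Re_left_edge: "x \<in> closed_segment corner_left 0 \<Longrightarrow> Re x \<le> 0"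
  using width_pos by (elim left_edge) (simp add: corner_left_def)

lemma enclosure_meets_cball: "polyline_image enclosure \<inter> cball c R \<subseteq> {0, 1}"
proof
  fix x assume x: "x \<in> polyline_image enclosure \<inter> cball c R"
  then have near: "dist c x \<le> R" by simp
  have slope: "0 \<le> Re (cnj (1 - c) * Complex width (- depth))" "0 \<le> Re (cnj (0 - c) * corner_left)"
    using outward_slope unfolding corner_left_def by (simp_all add: Re_center algebra_simps)
  from x consider "x \<in> closed_segment 1 corner_right" | "x \<in> closed_segment corner_right corner_left"
    | "x \<in> closed_segment corner_left 0" by auto
  then show "x \<in> {0, 1}"
  proof cases
    case 1
    then obtain t where t: "0 \<le> t" "x = 1 + of_real t * Complex width (- depth)" by (rule right_edge)
    have "Complex width (- depth) \<noteq> 0" using depth_pos by (simp add: complex_eq_iff)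
    then have "\<not> 0 < t"
      using dist_gt_radius_outward[OF _ slope(1)] one_on_circle near t(2) by fastforce
    then show ?thesis using t by simp
  next
    case 2
    then show ?thesis using bottom_edge Im_cball x by force
  next
    case 3
    then obtain t where t: "0 \<le> t" "x = of_real t * corner_left" by (rule left_edge)
    have "corner_left \<noteq> 0" using depth_pos by (simp add: corner_left_def complex_eq_iff)
    then have "\<not> 0 < t"
      using dist_gt_radius_outward[OF _ slope(2)] zero_on_circle near t(2) by fastforce
    then show ?thesis using t by simp
  qed
qed

lemma arc_enclosure: "arc (polypath enclosure)"
proof -
  have distinct: "1 \<noteq> corner_right" "corner_right \<noteq> corner_left" "corner_left \<noteq> 0"
    using depth_pos width_pos by (auto simp: corner_right_def corner_left_def complex_eq_iff)
  have bottom_left: "closed_segment corner_right corner_left \<inter> closed_segment corner_left 0 \<subseteq> {corner_left}"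
  proof
    fix x assume x: "x \<in> closed_segment corner_right corner_left \<inter> closed_segment corner_left 0"
    then obtain t where t: "x = of_real t * corner_left" using left_edge by blast
    have "Im x = - depth" using x bottom_edge by blast
    then have "t * depth = depth" using t by (simp add: corner_left_def)
    then show "x \<in> {corner_left}" using t depth_pos by simp
  qed
  have right_rest: "closed_segment 1 corner_right \<inter> polyline_image [corner_right, corner_left, 0] \<subseteq> {corner_right}"
  proof
    fix x assume x: "x \<in> closed_segment 1 corner_right \<inter> polyline_image [corner_right, corner_left, 0]"
    then obtain t where t: "0 \<le> t" "x = 1 + of_real t * Complex width (- depth)" using right_edge by blast
    have "x \<notin> closed_segment corner_left 0"
      using x Re_right_edge[of x] Re_left_edge[of x] by auto
    then have "Im x = - depth" using x bottom_edge by auto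
    then have "t * depth = depth" using t(2) by simp
    then show "x \<in> {corner_right}" using t depth_pos by (simp add: corner_right_def)
  qed
  show ?thesis
    using distinct bottom_left right_rest arc_polypath_Cons_iff[of "[0]" corner_right corner_left]
      arc_polypath_Cons_iff[of "[corner_left, 0]" 1 corner_right] by auto
qed

lemma polyline_winding_below_enclosure:
  assumes "polyline_image vs \<subseteq> cball c R" "length vs \<ge> 2" "hd vs = 0" "last vs = 1"
  obtains z where "z \<notin> polyline_image (chord_loop vs)"
    "polyline_winding (chord_loop vs) z = -1"
proof -
  define e where "e = 1 / (4 * (1 + 2 * width))"
  have e: "0 < e" "e * (1 + 2 * width) = 1/4" unfolding e_def using width_pos by auto
  have probe_coords: "Re (edge_offset corner_right corner_left (1/2) l) = 1/2"
    "Im (edge_offset corner_right corner_left (1/2) l) = - depth - l * (1 + 2 * width)" for l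
    by (simp_all add: edge_offset_def corner_right_def corner_left_def algebra_simps)
  have "vs \<noteq> []" using assms(2) by auto
  then have "polyline_image (vs @ [corner_right]) = polyline_image vs \<union> closed_segment 1 corner_right"
    using polyline_image_append_last[of vs "[corner_right]"] assms(4) by simp
  moreover have "x \<notin> polyline_image vs \<union> closed_segment 1 corner_right \<union> closed_segment corner_left 0"
    if x: "x \<in> closed_segment (edge_offset corner_right corner_left (1/2) e) (edge_offset corner_right corner_left (1/2) (-e))" for x
  proof -
    obtain l where l: "\<bar>l\<bar> \<le> e" "x = edge_offset corner_right corner_left (1/2) l"
      using closed_segment_edge_offsets[OF x less_imp_le[OF e(1)]] by blast
    have "(- l) * (1 + 2 * width) \<le> e * (1 + 2 * width)"
      using l(1) width_pos by (intro mult_right_mono) auto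
    then have "Im x < 1 - depth" "Re x = 1/2" using l(2) probe_coords e(2) by auto
    then show ?thesis using assms(1) Im_cball Re_right_edge Re_left_edge by fastforce
  qed
  ultimately have probe: "closed_segment (edge_offset corner_right corner_left (1/2) e) (edge_offset corner_right corner_left (1/2) (-e))
      \<inter> (polyline_image (vs @ [corner_right]) \<union> polyline_image [corner_left, 0]) = {}"
    by auto
  have closed: "hd (chord_loop vs) = last (chord_loop vs)"
    using \<open>vs \<noteq> []\<close> assms(3) by simp
  have distinct: "corner_right \<noteq> corner_left" using width_pos by (simp add: corner_right_def corner_left_def complex_eq_iff)
  have half: "(0::real) < 1/2" "(1/2::real) < 1" by simp_all
  note jump = polyline_winding_edge_jump[of vs corner_right corner_left "[0]" "1/2" e, OF closed distinct half e(1) probe]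
  have "polyline_winding (chord_loop vs) (edge_offset corner_right corner_left (1/2) e) = 0"
  proof (rule polyline_winding_zero_outside[OF closed _ convex_halfspace_Im_ge])
    show "set (chord_loop vs) \<subseteq> {x. - depth \<le> Im x}"
    proof -
      have "- depth \<le> Im x" if "x \<in> set vs" for x
      proof -
        have "x \<in> cball c R" using that assms(1,2) vertex_in_polyline_image[of vs] by blast
        then show ?thesis using Im_cball[of x] by simp
      qed
      then show ?thesis using depth_pos by (auto simp: corner_right_def corner_left_def)
    qed
    show "edge_offset corner_right corner_left (1/2) e \<notin> {x. - depth \<le> Im x}"
      using probe_coords(2)[of e] e by simp
  qed simp
  then have "polyline_winding (chord_loop vs) (edge_offset corner_right corner_left (1/2) (-e)) = -1"
    using jump(1) by (simp add: add_eq_0_iff2)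
  then show thesis using that jump(3) by blast
qed

lemma polyline_winding_at_top_of_chord:
  assumes chord: "polygonal_chord c R q vs" and ends: "hd vs = 0" "last vs = 1" and above: "0 < Im q"
    and turns: "\<And>i. 0 < i \<Longrightarrow> i < length vs - 1 \<Longrightarrow> 0 \<le> orient (vs ! (i - 1)) (vs ! i) (vs ! (i + 1))"
  obtains z where "z \<notin> polyline_image (chord_loop vs)"
    "polyline_winding (chord_loop vs) z = 1"
proof -
  have len: "length vs \<ge> 2" and arc: "arc (polypath vs)" and q: "q \<in> polyline_image vs"
    using chord path_image_polypath unfolding polygonal_chord_def by auto
  have image: "polyline_image vs \<subseteq> cball c R" by (rule polygonal_chord_image[OF chord])
  obtain xs b ys k where split: "vs = xs @ [vs ! (k - 1), b, vs ! (k + 1)] @ ys"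
    and k: "0 < k" "k < length vs - 1" "vs ! k = b" and b_high: "Im q \<le> Im b"
    and top: "\<And>x. x \<in> set vs \<Longrightarrow> Im x \<le> Im b"
    and leftmost: "\<And>x. x \<in> set vs \<Longrightarrow> Im x = Im b \<Longrightarrow> Re b \<le> Re x"
    by (rule top_left_vertex_interior[OF len _ _ q]) (use ends above in simp_all)
  define u w where "u = vs ! (k - 1)" and "w = vs ! (k + 1)"
  have turn: "0 \<le> orient u b w" using turns[OF k(1,2)] k(3) unfolding u_def w_def by simp
  note split = split[folded u_def w_def]
  have b: "b \<in> set vs" using split by simp
  note simple = arc_polypath_vertex[OF arc[unfolded split]]
  have "b \<in> cball c R" using image vertex_in_polyline_image[OF len b] by blast
  then have "b \<notin> polyline_image enclosure"
    using enclosure_meets_cball above b_high by auto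
  moreover have "polyline_image (w # ys @ [corner_right, corner_left, 0])
      = polyline_image (w # ys) \<union> polyline_image enclosure"
    using polyline_image_append_last[of "w # ys" "[corner_right, corner_left, 0]"] ends(2) split
    by (simp add: last_append)
  ultimately have isolated: "b \<notin> polyline_image (xs @ [u]) \<union> polyline_image (w # ys @ [corner_right, corner_left, 0])"
    using simple(4,5) by auto
  have ws: "vs @ [corner_right, corner_left, 0] = xs @ [u, b, w] @ (ys @ [corner_right, corner_left, 0])"
    using split by simp
  have enclosure_low: "Im x < Im b" if "x \<in> {corner_right, corner_left, 0}" for x
    using that above b_high depth_pos by (auto simp: corner_right_def corner_left_def)
  have "vs \<noteq> []" using b by auto
  then have closed: "hd (chord_loop vs) = last (chord_loop vs)"
    using ends by simp
  have top': "Im x \<le> Im b" if "x \<in> set (chord_loop vs)" for x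
    using that top[of x] enclosure_low[of x] by (cases "x \<in> set vs") auto
  have leftmost': "Re b \<le> Re x" if "x \<in> set (chord_loop vs)" "Im x = Im b" for x
    using that leftmost[of x] enclosure_low[of x] by (cases "x \<in> set vs") auto
  show thesis
    using polyline_winding_one_at_top_vertex[of xs u b w "ys @ [corner_right, corner_left, 0]", folded ws,
        OF closed top' leftmost' simple(1-3) isolated turn] that by blast
qed

lemma simple_chord_loop:
  assumes chord: "polygonal_chord c R q vs" and ends: "hd vs = 0" "last vs = 1"
  obtains \<Gamma> where "simple_path \<Gamma>" "pathfinish \<Gamma> = pathstart \<Gamma>" "path_image \<Gamma> = polyline_image (chord_loop vs)"
    "\<And>x. x \<notin> polyline_image (chord_loop vs) \<Longrightarrow> winding_number \<Gamma> x = polyline_winding (chord_loop vs) x"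
proof -
  have len: "length vs \<ge> 2" and arc: "arc (polypath vs)" using chord unfolding polygonal_chord_def by auto
  then have vs_ne: "vs \<noteq> []" by auto
  define \<Gamma> where "\<Gamma> = polypath vs +++ polypath enclosure"
  have K: "path_image (polypath enclosure) = polyline_image enclosure"
    "pathstart (polypath enclosure) = 1" "pathfinish (polypath enclosure) = 0"
    by (subst path_image_polypath pathstart_polypath pathfinish_polypath; simp)+
  have V: "path_image (polypath vs) = polyline_image vs" "pathstart (polypath vs) = 0" "pathfinish (polypath vs) = 1"
    using len ends vs_ne by (simp_all add: path_image_polypath pathstart_polypath pathfinish_polypath)
  have loop: "polyline_image (chord_loop vs) = polyline_image vs \<union> polyline_image enclosure"
    using polyline_image_append_last[OF vs_ne, of "[corner_right, corner_left, 0]"] ends(2) by simp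
  show thesis
  proof (rule that)
    show "simple_path \<Gamma>"
      unfolding \<Gamma>_def using polygonal_chord_image[OF chord] enclosure_meets_cball
      by (intro simple_path_join_loop[OF arc arc_enclosure]) (unfold K V, auto)
    show "pathfinish \<Gamma> = pathstart \<Gamma>"
      unfolding \<Gamma>_def by (simp only: pathstart_join pathfinish_join K V)
    show "path_image \<Gamma> = polyline_image (chord_loop vs)"
      unfolding \<Gamma>_def loop by (simp only: path_image_join K V)
    fix x assume "x \<notin> polyline_image (chord_loop vs)"
    then have off: "x \<notin> polyline_image vs" "x \<notin> polyline_image enclosure" using loop by auto
    have "winding_number \<Gamma> x = winding_number (polypath vs) x + winding_number (polypath enclosure) x"
      unfolding \<Gamma>_def using off by (intro winding_number_join path_polypath) (unfold K V, auto)
    also have "\<dots> = polyline_winding vs x + polyline_winding enclosure x"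
      using winding_number_polypath[OF len off(1)] winding_number_polypath[of enclosure, OF _ off(2)] by simp
    also have "\<dots> = polyline_winding (chord_loop vs) x"
      using polyline_winding_append_last[OF vs_ne, of "[corner_right, corner_left, 0]" x] ends(2) by simp
    finally show "winding_number \<Gamma> x = polyline_winding (chord_loop vs) x" .
  qed
qed

lemma clockwise_vertex_exists:
  assumes chord: "polygonal_chord c R q vs" and ends: "hd vs = 0" "last vs = 1" and above: "0 < Im q"
  shows "\<exists>i. 0 < i \<and> i < length vs - 1 \<and> orient (vs ! (i - 1)) (vs ! i) (vs ! (i + 1)) < 0"
proof (rule ccontr)
  assume "\<not> ?thesis"
  then have turns: "\<And>i. 0 < i \<Longrightarrow> i < length vs - 1 \<Longrightarrow> 0 \<le> orient (vs ! (i - 1)) (vs ! i) (vs ! (i + 1))"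
    by (meson not_less)
  obtain z where z: "z \<notin> polyline_image (chord_loop vs)" "polyline_winding (chord_loop vs) z = 1"
    using polyline_winding_at_top_of_chord[OF chord ends above turns] by blast
  have "length vs \<ge> 2" using chord unfolding polygonal_chord_def by simp
  then obtain w where w: "w \<notin> polyline_image (chord_loop vs)" "polyline_winding (chord_loop vs) w = -1"
    using polyline_winding_below_enclosure[OF polygonal_chord_image[OF chord] _ ends] by blast
  obtain \<Gamma> where "simple_path \<Gamma>" "pathfinish \<Gamma> = pathstart \<Gamma>" and image: "path_image \<Gamma> = polyline_image (chord_loop vs)"
    and winding: "\<And>x. x \<notin> polyline_image (chord_loop vs) \<Longrightarrow> winding_number \<Gamma> x = polyline_winding (chord_loop vs) x"
    using simple_chord_loop[OF chord ends] by blast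
  then show False
    using simple_closed_path_winding_numbers_agree[of \<Gamma> z w] z w winding[OF z(1)] winding[OF w(1)] by simp
qed

end

lemma clockwise_vertex_of_chord:
  assumes chord: "polygonal_chord c R q vs" and clockwise: "orient (hd vs) q (last vs) < 0"
  shows "\<exists>i. 0 < i \<and> i < length vs - 1 \<and> orient (vs ! (i - 1)) (vs ! i) (vs ! (i + 1)) < 0"
proof -
  define p r where "p = hd vs" and "r = last vs"
  have vs: "vs \<noteq> []" "arc (polypath vs)" using chord unfolding polygonal_chord_def by auto
  then have "p \<noteq> r"
    using arc_distinct_ends[of "polypath vs"] unfolding p_def r_def by (simp add: pathstart_polypath pathfinish_polypath)
  define w where "w = inverse (r - p)"
  define f where "f z = (z - p) * w" for z
  have w: "0 < cmod w" "f p = 0" "f r = 1" using \<open>p \<noteq> r\<close> by (simp_all add: w_def f_def)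
  have orient_f: "orient (f a) (f b) (f x) = (cmod w)\<^sup>2 * orient a b x" for a b x
    unfolding f_def by (rule orient_similarity)
  have "dist (f x) (f y) = cmod w * dist x y" for x y
  proof -
    have "f x - f y = (x - y) * w" by (simp add: f_def algebra_simps)
    then show ?thesis by (simp add: dist_norm norm_mult)
  qed
  then have chord': "polygonal_chord (f c) (cmod w * R) (f q) (map f vs)"
    by (intro polygonal_chord_map[OF _ _ w(1) chord]) (simp_all add: f_def algebra_simps)
  have ends': "hd (map f vs) = 0" "last (map f vs) = 1" using vs w unfolding p_def r_def by (simp_all add: hd_map last_map)
  have "{hd (map f vs), last (map f vs)} \<subseteq> sphere (f c) (cmod w * R)"
    using chord' unfolding polygonal_chord_def by (metis inf_le2)
  then have "{0, 1} \<subseteq> sphere (f c) (cmod w * R)" unfolding ends' .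
  then interpret circle_through_0_1 "f c" "cmod w * R" by unfold_locales auto
  have "orient 0 (f q) 1 < 0" using orient_f[of p q r] clockwise w(1-3) unfolding p_def r_def by (simp add: mult_pos_neg)
  then have "0 < Im (f q)" by (simp add: orient_def)
  then obtain i where i: "0 < i" "i < length vs - 1" "orient (f (vs ! (i - 1))) (f (vs ! i)) (f (vs ! (i + 1))) < 0"
    using clockwise_vertex_exists[OF chord' ends'] by auto
  then have "(cmod w)\<^sup>2 * orient (vs ! (i - 1)) (vs ! i) (vs ! (i + 1)) < 0"
    by (simp only: orient_f)
  then have "orient (vs ! (i - 1)) (vs ! i) (vs ! (i + 1)) < 0"
    using w(1) by (simp add: mult_less_0_iff)
  then show ?thesis using i(1,2) by blast
qed

theorem lemma10:
  fixes c p q r :: complex and R :: real and vs :: "complex list"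
  assumes "R > 0"
    and "p \<in> sphere c R" and "r \<in> sphere c R"
    and "q \<in> ball c R"
    and "length vs \<ge> 2" and "hd vs = p" and "last vs = r"
    and "arc (polypath vs)"
    and "q \<in> path_image (polypath vs)"
    and "path_image (polypath vs) \<inter> sphere c R = {p, r}"
  shows "(orient p q r < 0 \<longrightarrow>
            (\<exists>i. 0 < i \<and> i < length vs - 1 \<and> orient (vs ! (i - 1)) (vs ! i) (vs ! (i + 1)) < 0))
       \<and> (orient p q r > 0 \<longrightarrow>
            (\<exists>i. 0 < i \<and> i < length vs - 1 \<and> orient (vs ! (i - 1)) (vs ! i) (vs ! (i + 1)) > 0))"
proof -
  have chord: "polygonal_chord c R q vs"
    using assms unfolding polygonal_chord_def by simp
  have "dist (cnj x) (cnj y) = 1 * dist x y" for x y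
    by (metis complex_cnj_diff complex_mod_cnj dist_norm mult_1)
  then have cnj_chord: "polygonal_chord (cnj c) (1 * R) (cnj q) (map cnj vs)"
    by (intro polygonal_chord_map[OF _ _ _ chord]) simp_all
  have "vs \<noteq> []" using assms(5) by auto
  show ?thesis
  proof (intro conjI impI)
    assume "orient p q r < 0"
    then show "\<exists>i. 0 < i \<and> i < length vs - 1 \<and> orient (vs ! (i - 1)) (vs ! i) (vs ! (i + 1)) < 0"
      using clockwise_vertex_of_chord[OF chord] assms(6,7) by simp
  next
    assume "orient p q r > 0"
    then have "orient (hd (map cnj vs)) (cnj q) (last (map cnj vs)) < 0"
      using \<open>vs \<noteq> []\<close> assms(6,7) by (simp add: hd_map last_map orient_cnj)
    then obtain i where i: "0 < i" "i < length (map cnj vs) - 1"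
      "orient (map cnj vs ! (i - 1)) (map cnj vs ! i) (map cnj vs ! (i + 1)) < 0"
      using clockwise_vertex_of_chord[OF cnj_chord] by blast
    then have "orient (vs ! (i - 1)) (vs ! i) (vs ! (i + 1)) > 0" by (simp add: orient_cnj)
    then show "\<exists>i. 0 < i \<and> i < length vs - 1 \<and> orient (vs ! (i - 1)) (vs ! i) (vs ! (i + 1)) > 0"
      using i(1,2) by auto
  qed
qed

end
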